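(* Let $(X,d)$ be a metric space, $\mu$ a non-atomic Borel measure on $X$, $m$ a Borel measure on $X$, $0<p<\infty$, and let $\Gamma^*\subset\Gamma^\mu$ be a family of paths closed under taking non-trivial subpaths such that any two points of $X$ are joined by a path in $\Gamma^*$. Let $F\subset X$ satisfy $$\inf\{\|f\|_{N^{1,p}}: f\in\tilde N^{1,p}(X),\ f|_F\ge1\}=0.$$ Then $\mathrm{Mod}_p(\Gamma_F)=0$, where $\Gamma_F=\{\gamma\in\Gamma^*:\mathrm{Im}(\gamma)\cap F\neq\emptyset\}$.
   Context: A path is a continuous map $\gamma:[a,b]\to X$; a subpath is a restriction to a subinterval, trivial if that interval is a point; $\mathrm{Im}(\gamma)=\gamma([a,b])$. $\mu$ non-atomic: $\mu(\{x\})=0$ for all $x$. $\Gamma^\mu$ is the set of all non-trivial injective paths $\gamma$ with $0<\mu(\mathrm{Im}(\tilde\gamma))<\infty$ for every non-trivial subpath $\tilde\gamma$. For Borel $g\ge0$, $\int_\gamma g:=\int_{\mathrm{Im}(\gamma)}g\,d\mu$. For $\Gamma\subset\Gamma^*$, $\mathrm{Mod}_p(\Gamma)=\inf\int_Xg^p\,dm$ over Borel $g\ge0$ with $\int_\gamma g\ge1$ for all $\gamma\in\Gamma$. A Borel $\rho\ge0$ is a $p$-weak upper gradient of $f$ if $|f(x)-f(y)|\le\int_\gamma\rho$ for all $\gamma\in\Gamma^*$ outside a family of $p$-modulus zero, $x,y$ the endpoints of $\gamma$. $\tilde N^{1,p}(X)$ is the set of $f\in L^p(m)$ having a $p$-weak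 upper gradient in $L^p(m)$, with $\|f\|_{N^{1,p}}=\|f\|_{L^p(m)}+\inf_\rho\|\rho\|_{L^p(m)}$ over all $p$-weak upper gradients $\rho$ of $f$. *)

theory Defs
  imports "HOL-Analysis.Analysis"
begin

definition epow :: "ennreal \<Rightarrow> real \<Rightarrow> ennreal" where
  "epow x q = (if x = \<infinity> then \<infinity> else ennreal (enn2real x powr q))"

text \<open>A path is a triple (a, b, g) standing for the map g restricted to [a,b].\<close>
type_synonym 'a path = "real \<times> real \<times> (real \<Rightarrow> 'a)"

definition is_path :: "'a::topological_space path \<Rightarrow> bool" where
  "is_path \<gamma> = (case \<gamma> of (a, b, g) \<Rightarrow> a \<le> b \<and> continuous_on {a..b} g)"

definition Im :: "'a path \<Rightarrow> 'a set" where
  "Im \<gamma> = (case \<gamma> of (a, b, g) \<Rightarrow> g ` {a..b})"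

definition start_pt :: "'a path \<Rightarrow> 'a" where
  "start_pt \<gamma> = (case \<gamma> of (a, b, g) \<Rightarrow> g a)"

definition end_pt :: "'a path \<Rightarrow> 'a" where
  "end_pt \<gamma> = (case \<gamma> of (a, b, g) \<Rightarrow> g b)"

definition nontriv_subpaths :: "'a path \<Rightarrow> 'a path set" where
  "nontriv_subpaths \<gamma> = (case \<gamma> of (a, b, g) \<Rightarrow> {(c, d, g) | c d. a \<le> c \<and> c < d \<and> d \<le> b})"

definition Gamma_mu :: "'a::metric_space measure \<Rightarrow> 'a path set" where
  "Gamma_mu \<mu> = {\<gamma>. is_path \<gamma> \<and> fst \<gamma> < fst (snd \<gamma>)
      \<and> inj_on (snd (snd \<gamma>)) {fst \<gamma>..fst (snd \<gamma>)}
      \<and> (\<forall>\<sigma>\<in>nontriv_subpaths \<gamma>. 0 < emeasure \<mu> (Im \<sigma>) \<and> emeasure \<mu> (Im \<sigma>) < \<infinity>)}"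

definition line_int :: "'a measure \<Rightarrow> 'a path \<Rightarrow> ('a \<Rightarrow> ennreal) \<Rightarrow> ennreal" where
  "line_int \<mu> \<gamma> g = (\<integral>\<^sup>+ x. g x * indicator (Im \<gamma>) x \<partial>\<mu>)"

definition Mod :: "real \<Rightarrow> 'a::metric_space measure \<Rightarrow> 'a measure \<Rightarrow> 'a path set \<Rightarrow> ennreal" where
  "Mod p m \<mu> \<Gamma> = (INF g \<in> {g. g \<in> borel_measurable borel \<and> (\<forall>\<gamma>\<in>\<Gamma>. line_int \<mu> \<gamma> g \<ge> 1)}.
      \<integral>\<^sup>+ x. epow (g x) p \<partial>m)"

definition weak_upper_gradient ::
  "real \<Rightarrow> 'a::metric_space measure \<Rightarrow> 'a measure \<Rightarrow> 'a path set \<Rightarrow> ('a \<Rightarrow> real) \<Rightarrow> ('a \<Rightarrow> ennreal) \<Rightarrow> bool" where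
  "weak_upper_gradient p m \<mu> \<Gamma>s f \<rho> \<longleftrightarrow> \<rho> \<in> borel_measurable borel \<and>
     (\<exists>\<Gamma>0 \<subseteq> \<Gamma>s. Mod p m \<mu> \<Gamma>0 = 0 \<and>
        (\<forall>\<gamma>\<in>\<Gamma>s - \<Gamma>0. ennreal \<bar>f (start_pt \<gamma>) - f (end_pt \<gamma>)\<bar> \<le> line_int \<mu> \<gamma> \<rho>))"

definition Lp_norm_real :: "real \<Rightarrow> 'a measure \<Rightarrow> ('a \<Rightarrow> real) \<Rightarrow> ennreal" where
  "Lp_norm_real p m f = epow (\<integral>\<^sup>+ x. ennreal (\<bar>f x\<bar> powr p) \<partial>m) (1 / p)"

definition Lp_norm_enn :: "real \<Rightarrow> 'a measure \<Rightarrow> ('a \<Rightarrow> ennreal) \<Rightarrow> ennreal" where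
  "Lp_norm_enn p m \<rho> = epow (\<integral>\<^sup>+ x. epow (\<rho> x) p \<partial>m) (1 / p)"

definition N1p_tilde ::
  "real \<Rightarrow> 'a::metric_space measure \<Rightarrow> 'a measure \<Rightarrow> 'a path set \<Rightarrow> ('a \<Rightarrow> real) set" where
  "N1p_tilde p m \<mu> \<Gamma>s = {f. f \<in> borel_measurable m \<and> Lp_norm_real p m f < \<infinity> \<and>
      (\<exists>\<rho>. weak_upper_gradient p m \<mu> \<Gamma>s f \<rho> \<and> Lp_norm_enn p m \<rho> < \<infinity>)}"

definition N1p_norm ::
  "real \<Rightarrow> 'a::metric_space measure \<Rightarrow> 'a measure \<Rightarrow> 'a path set \<Rightarrow> ('a \<Rightarrow> real) \<Rightarrow> ennreal" where
  "N1p_norm p m \<mu> \<Gamma>s f = Lp_norm_real p m f +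
      (INF \<rho> \<in> {\<rho>. weak_upper_gradient p m \<mu> \<Gamma>s f \<rho>}. Lp_norm_enn p m \<rho>)"

end

theory Submission
  imports Defs
begin

text \<open>
  The paths in \<open>\<Gamma>\<^sub>F\<close> with \<open>\<mu>(Im \<gamma>) \<ge> 1/c\<close>, for \<open>c = 1, 2, \<dots>\<close>, exhaust \<open>\<Gamma>\<^sub>F\<close>,
  and \<open>p\<close>-modulus is countably subadditive, so each of these families must be shown to be
  null. Take \<open>f \<ge> 1\<close> on \<open>F\<close> with small \<open>N\<^sup>1\<^sup>,\<^sup>p\<close> norm, a \<open>p\<close>-weak upper gradient \<open>\<rho>\<close> of
  small \<open>L\<^sup>p\<close> norm and its exceptional family \<open>\<Gamma>\<^sub>0\<close> of modulus zero. A path of the family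
  without subpath in \<open>\<Gamma>\<^sub>0\<close> either has \<open>\<integral>\<^sub>\<gamma> \<rho> \<ge> 1/2\<close> or, since \<open>|f(x) - f(y)| \<le> \<integral>\<^sub>\<gamma> \<rho>\<close>
  for points on it, satisfies \<open>|f| \<ge> 1/2\<close> along all of \<open>\<gamma>\<close>; in both cases \<open>max (2\<rho>, 2c|f|)\<close>
  is admissible, and its \<open>p\<close>-energy is small.
\<close>

lemma epow_measurable[measurable]:
  assumes "g \<in> borel_measurable M"
  shows "(\<lambda>x. epow (g x) p) \<in> borel_measurable M"
proof -
  have "{x\<in>space M. g x = \<infinity>} \<in> sets M" using assms by measurable
  moreover have "(\<lambda>x. ennreal (enn2real (g x) powr p)) \<in> borel_measurable M" using assms by measurable
  ultimately show ?thesis unfolding epow_def by (intro measurable_If) auto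
qed

lemma epow_ennreal: "0 \<le> r \<Longrightarrow> epow (ennreal r) p = ennreal (r powr p)"
  by (simp add: epow_def)

lemma epow_zero [simp]: "epow 0 p = 0"
  by (simp add: epow_def)

lemma epow_mono:
  assumes "0 \<le> p" "a \<le> b"
  shows "epow a p \<le> epow b p"
proof (cases "b = \<infinity>")
  case True
  then show ?thesis by (simp add: epow_def)
next
  case False
  then have "a \<noteq> \<infinity>" using assms top.extremum_unique by fastforce
  moreover have "enn2real a \<le> enn2real b"
    using False assms(2) by (simp add: enn2real_mono top.not_eq_extremum)
  ultimately show ?thesis using False assms by (simp add: epow_def powr_mono2)
qed

lemma epow_mult_ennreal:
  assumes "0 < c"
  shows "epow (ennreal c * x) p = ennreal (c powr p) * epow x p"
proof (cases "x = \<infinity>")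
  case True
  then show ?thesis using assms by (simp add: epow_def ennreal_mult_top)
next
  case False
  then obtain r where r: "x = ennreal r" "0 \<le> r" by (cases x) auto
  have "ennreal c * x = ennreal (c * r)" using assms r by (simp add: ennreal_mult)
  then have "epow (ennreal c * x) p = ennreal ((c * r) powr p)" using assms r by (simp add: epow_def)
  also have "\<dots> = ennreal (c powr p) * ennreal (r powr p)" using assms r by (simp add: powr_mult ennreal_mult)
  finally show ?thesis using r by (simp add: epow_def)
qed

lemma epow_max_le: "0 \<le> p \<Longrightarrow> epow (max a b) p \<le> epow a p + epow b p"
  by (cases "a \<le> b") (auto simp: max_def intro: add_increasing add_increasing2)

lemma epow_SUP_le_suminf:
  assumes "0 < p"
  shows "epow (SUP n. g n) p \<le> (\<Sum>n. epow (g n) p)"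
proof (cases "(\<Sum>n. epow (g n) p) = \<infinity>")
  case True
  then show ?thesis by simp
next
  case False
  then obtain s where s: "(\<Sum>n. epow (g n) p) = ennreal s" "0 \<le> s"
    by (cases "(\<Sum>n. epow (g n) p)") auto
  have bound: "g n \<le> ennreal (s powr (1/p))" for n
  proof -
    have le: "epow (g n) p \<le> ennreal s" using sum_le_suminf[of "\<lambda>n. epow (g n) p" "{n}"] s by simp
    then have finite: "g n \<noteq> \<infinity>" by (auto simp: epow_def top_unique)
    then have "enn2real (g n) powr p \<le> s" using le s(2) by (simp add: epow_def)
    then have "(enn2real (g n) powr p) powr (1/p) \<le> s powr (1/p)"
      using assms by (intro powr_mono2) auto
    then have "enn2real (g n) \<le> s powr (1/p)" using assms by (simp add: powr_powr)
    then show ?thesis using finite by (cases "g n") (auto intro: ennreal_leI)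
  qed
  have "epow (SUP n. g n) p \<le> epow (ennreal (s powr (1/p))) p"
    using assms by (intro epow_mono) (auto intro: SUP_least bound)
  also have "\<dots> = ennreal s" using assms s(2) by (simp add: epow_ennreal powr_powr)
  finally show ?thesis using s by simp
qed

lemma less_of_epow_inverse_less:
  assumes "epow I (1/p) < ennreal (\<eta> powr (1/p))" "0 < p" "0 < \<eta>"
  shows "I < ennreal \<eta>"
proof -
  have "I \<noteq> \<infinity>" using assms(1) by (auto simp: epow_def)
  then obtain i where i: "I = ennreal i" "0 \<le> i" by (cases I) auto
  then have "i powr (1/p) < \<eta> powr (1/p)" using assms(1) by (simp add: epow_def ennreal_less_iff)
  moreover have "\<eta> \<le> i \<Longrightarrow> \<eta> powr (1/p) \<le> i powr (1/p)" using assms by (intro powr_mono2) auto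
  ultimately have "i < \<eta>" by linarith
  then show ?thesis using i assms by (simp add: ennreal_lessI)
qed

lemma line_int_mono:
  "Im \<sigma> \<subseteq> Im \<gamma> \<Longrightarrow> (\<And>x. g x \<le> h x) \<Longrightarrow> line_int \<mu> \<sigma> g \<le> line_int \<mu> \<gamma> h"
  unfolding line_int_def by (intro nn_integral_mono) (auto intro: mult_mono split: split_indicator)

lemma Im_nontriv_subpath: "\<sigma> \<in> nontriv_subpaths \<gamma> \<Longrightarrow> Im \<sigma> \<subseteq> Im \<gamma>"
  by (cases \<gamma>) (auto simp: nontriv_subpaths_def Im_def)

lemma closed_Im: "is_path (\<gamma> :: 'a::t2_space path) \<Longrightarrow> closed (Im \<gamma>)"
  by (cases \<gamma>) (auto simp: is_path_def Im_def intro!: compact_imp_closed compact_continuous_image)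

lemma Gamma_mu_emeasure_Im_pos:
  assumes "\<gamma> \<in> Gamma_mu \<mu>"
  shows "0 < emeasure \<mu> (Im \<gamma>)"
proof -
  have "\<gamma> \<in> nontriv_subpaths \<gamma>"
    using assms by (cases \<gamma>) (auto simp: Gamma_mu_def nontriv_subpaths_def)
  then show ?thesis using assms by (auto simp: Gamma_mu_def)
qed

lemma Mod_le:
  "g \<in> borel_measurable borel \<Longrightarrow> (\<And>\<gamma>. \<gamma> \<in> \<Gamma> \<Longrightarrow> 1 \<le> line_int \<mu> \<gamma> g)
    \<Longrightarrow> Mod p m \<mu> \<Gamma> \<le> (\<integral>\<^sup>+x. epow (g x) p \<partial>m)"
  unfolding Mod_def by (rule INF_lower) auto

lemma Mod_lessE:
  assumes "Mod p m \<mu> \<Gamma> < c"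
  obtains g where "g \<in> borel_measurable borel" "\<And>\<gamma>. \<gamma> \<in> \<Gamma> \<Longrightarrow> 1 \<le> line_int \<mu> \<gamma> g"
    "(\<integral>\<^sup>+x. epow (g x) p \<partial>m) < c"
  using assms unfolding Mod_def INF_less_iff by auto

lemma Mod_empty: "Mod p m \<mu> {} = 0"
proof -
  have "Mod p m \<mu> {} \<le> (\<integral>\<^sup>+x. epow 0 p \<partial>m)" by (rule Mod_le) auto
  then show ?thesis by simp
qed

lemma Mod_mono: "\<Gamma> \<subseteq> \<Gamma>' \<Longrightarrow> Mod p m \<mu> \<Gamma> \<le> Mod p m \<mu> \<Gamma>'"
  unfolding Mod_def by (rule INF_superset_mono) auto

lemma Mod_le_subpath_family:
  assumes "\<And>\<gamma>. \<gamma> \<in> \<Gamma> \<Longrightarrow> \<exists>\<sigma>\<in>\<Gamma>'. Im \<sigma> \<subseteq> Im \<gamma>"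
  shows "Mod p m \<mu> \<Gamma> \<le> Mod p m \<mu> \<Gamma>'"
  unfolding Mod_def
proof (rule INF_mono)
  fix g assume g: "g \<in> {g \<in> borel_measurable borel. \<forall>\<gamma>\<in>\<Gamma>'. 1 \<le> line_int \<mu> \<gamma> g}"
  have "1 \<le> line_int \<mu> \<gamma> g" if \<gamma>: "\<gamma> \<in> \<Gamma>" for \<gamma>
  proof -
    obtain \<sigma> where "\<sigma> \<in> \<Gamma>'" "Im \<sigma> \<subseteq> Im \<gamma>" using assms[OF \<gamma>] by blast
    then show ?thesis using g line_int_mono[of \<sigma> \<gamma> g g \<mu>] by fastforce
  qed
  with g show "\<exists>g'\<in>{g \<in> borel_measurable borel. \<forall>\<gamma>\<in>\<Gamma>. 1 \<le> line_int \<mu> \<gamma> g}.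
      (\<integral>\<^sup>+x. epow (g' x) p \<partial>m) \<le> (\<integral>\<^sup>+x. epow (g x) p \<partial>m)"
    by auto
qed

lemma Mod_UN_le:
  fixes G :: "nat \<Rightarrow> 'a::metric_space path set"
  assumes p: "0 < p" and sets_m: "sets m = sets borel"
  shows "Mod p m \<mu> (\<Union>n. G n) \<le> (\<Sum>n. Mod p m \<mu> (G n))"
proof (rule ennreal_le_epsilon)
  fix e :: real assume finite_sum: "(\<Sum>n. Mod p m \<mu> (G n)) < top" and e: "0 < e"
  define \<epsilon> where "\<epsilon> n = e * (1/2) ^ Suc n" for n
  have "Mod p m \<mu> (G n) < Mod p m \<mu> (G n) + ennreal (\<epsilon> n)" for n
  proof -
    have "Mod p m \<mu> (G n) < top"
      using sum_le_suminf[of "\<lambda>n. Mod p m \<mu> (G n)" "{n}"] finite_sum by simp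
    then show ?thesis using e by (cases "Mod p m \<mu> (G n)") (auto simp: \<epsilon>_def ennreal_less_iff simp flip: ennreal_plus)
  qed
  then have "\<forall>n. \<exists>g. g \<in> borel_measurable borel \<and> (\<forall>\<gamma>\<in>G n. 1 \<le> line_int \<mu> \<gamma> g)
      \<and> (\<integral>\<^sup>+x. epow (g x) p \<partial>m) < Mod p m \<mu> (G n) + ennreal (\<epsilon> n)"
    by (metis Mod_lessE)
  then obtain g where g_meas: "\<And>n. g n \<in> borel_measurable borel"
    and g_adm: "\<And>n \<gamma>. \<gamma> \<in> G n \<Longrightarrow> 1 \<le> line_int \<mu> \<gamma> (g n)"
    and g_energy: "\<And>n. (\<integral>\<^sup>+x. epow (g n x) p \<partial>m) < Mod p m \<mu> (G n) + ennreal (\<epsilon> n)"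
    by metis
  define H where "H x = (SUP n. g n x)" for x
  have H_meas: "H \<in> borel_measurable borel" unfolding H_def using g_meas by measurable
  have H_adm: "1 \<le> line_int \<mu> \<gamma> H" if \<gamma>: "\<gamma> \<in> (\<Union>n. G n)" for \<gamma>
  proof -
    obtain n where "\<gamma> \<in> G n" using \<gamma> by auto
    then have "1 \<le> line_int \<mu> \<gamma> (g n)" by (rule g_adm)
    also have "\<dots> \<le> line_int \<mu> \<gamma> H" unfolding H_def by (intro line_int_mono) (auto intro: SUP_upper)
    finally show ?thesis .
  qed
  have "(\<Sum>n. ennreal (\<epsilon> n)) = ennreal e"
  proof -
    have "\<epsilon> sums (e * 1)" unfolding \<epsilon>_def by (intro sums_mult power_half_series)
    then have "(\<lambda>n. ennreal (\<epsilon> n)) sums ennreal e" using e by (subst sums_ennreal) (auto simp: \<epsilon>_def)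
    then show ?thesis by (rule sums_unique[symmetric])
  qed
  have "Mod p m \<mu> (\<Union>n. G n) \<le> (\<integral>\<^sup>+x. epow (H x) p \<partial>m)" by (rule Mod_le[OF H_meas H_adm])
  also have "\<dots> \<le> (\<integral>\<^sup>+x. (\<Sum>n. epow (g n x) p) \<partial>m)"
    unfolding H_def using p by (intro nn_integral_mono epow_SUP_le_suminf)
  also have "\<dots> = (\<Sum>n. \<integral>\<^sup>+x. epow (g n x) p \<partial>m)"
    using g_meas by (intro nn_integral_suminf) (simp add: measurable_cong_sets[OF sets_m refl])
  also have "\<dots> \<le> (\<Sum>n. Mod p m \<mu> (G n) + ennreal (\<epsilon> n))"
    by (intro suminf_le less_imp_le[OF g_energy]) auto
  also have "\<dots> = (\<Sum>n. Mod p m \<mu> (G n)) + ennreal e"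
    using \<open>(\<Sum>n. ennreal (\<epsilon> n)) = ennreal e\<close> by (simp add: suminf_add[symmetric])
  finally show "Mod p m \<mu> (\<Union>n. G n) \<le> (\<Sum>n. Mod p m \<mu> (G n)) + ennreal e" .
qed

lemma Mod_Un_le:
  fixes A B :: "'a::metric_space path set"
  assumes "0 < p" "sets m = sets borel"
  shows "Mod p m \<mu> (A \<union> B) \<le> Mod p m \<mu> A + Mod p m \<mu> B"
proof -
  define G where "G n = (if n = 0 then A else if n = 1 then B else {})" for n :: nat
  have "A \<union> B = (\<Union>n. G n)"
    unfolding G_def by (auto split: if_splits intro: exI[of _ 0] exI[of _ 1])
  then have "Mod p m \<mu> (A \<union> B) \<le> (\<Sum>n. Mod p m \<mu> (G n))"
    using Mod_UN_le[OF assms] by simp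
  also have "\<dots> = (\<Sum>n\<in>{0, 1}. Mod p m \<mu> (G n))"
    by (rule suminf_finite) (auto simp: G_def Mod_empty)
  also have "\<dots> = Mod p m \<mu> A + Mod p m \<mu> B" by (simp add: G_def)
  finally show ?thesis .
qed

lemma ex_Suc_mult_ge_one:
  fixes x :: ennreal
  assumes "0 < x"
  obtains n where "1 \<le> ennreal (real (Suc n)) * x"
proof (cases x)
  case (real r)
  then have "0 < r" using assms by auto
  then obtain n where "inverse (real (Suc n)) < r" using reals_Archimedean by blast
  then have "1 \<le> real (Suc n) * r" by (simp add: field_simps)
  then have "ennreal 1 \<le> ennreal (real (Suc n) * r)" by (rule ennreal_leI)
  then have "1 \<le> ennreal (real (Suc n)) * x" using real by (simp add: ennreal_mult)
  then show ?thesis by (rule that)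
next
  case top
  then show ?thesis by (intro that[of 0]) simp
qed

lemma oscillation_le_line_int:
  assumes \<gamma>: "\<gamma> \<in> \<Gamma>s"
    and subpath_closed: "\<And>\<sigma>. \<sigma> \<in> nontriv_subpaths \<gamma> \<Longrightarrow> \<sigma> \<in> \<Gamma>s"
    and no_exceptional_subpath: "\<forall>\<sigma>\<in>nontriv_subpaths \<gamma>. \<sigma> \<notin> \<Gamma>0"
    and upper_gradient: "\<forall>\<sigma>\<in>\<Gamma>s - \<Gamma>0. ennreal \<bar>f (start_pt \<sigma>) - f (end_pt \<sigma>)\<bar> \<le> line_int \<mu> \<sigma> \<rho>"
    and xy: "x \<in> Im \<gamma>" "y \<in> Im \<gamma>"
  shows "ennreal \<bar>f x - f y\<bar> \<le> line_int \<mu> \<gamma> \<rho>"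
proof -
  obtain a b g where \<gamma>_eq: "\<gamma> = (a, b, g)" by (cases \<gamma>) auto
  obtain s t where st: "s \<in> {a..b}" "x = g s" "t \<in> {a..b}" "y = g t"
    using xy by (auto simp: \<gamma>_eq Im_def)
  show ?thesis
  proof (cases "s = t")
    case True
    then show ?thesis using st by simp
  next
    case False
    define \<sigma> where "\<sigma> = (min s t, max s t, g)"
    have "\<sigma> \<in> nontriv_subpaths \<gamma>"
      using False st by (auto simp: \<sigma>_def \<gamma>_eq nontriv_subpaths_def min_def max_def)
    then have "ennreal \<bar>f (start_pt \<sigma>) - f (end_pt \<sigma>)\<bar> \<le> line_int \<mu> \<sigma> \<rho>"
      using subpath_closed no_exceptional_subpath upper_gradient by blast
    also have "\<dots> \<le> line_int \<mu> \<gamma> \<rho>"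
      by (intro line_int_mono Im_nontriv_subpath \<open>\<sigma> \<in> nontriv_subpaths \<gamma>\<close>) simp
    finally show ?thesis
      using st by (auto simp: \<sigma>_def start_pt_def end_pt_def min_def max_def abs_minus_commute split: if_splits)
  qed
qed

lemma one_le_line_int_max:
  fixes f :: "'a \<Rightarrow> real"
  assumes Im_sets: "Im \<gamma> \<in> sets \<mu>" and \<rho>_meas: "\<rho> \<in> borel_measurable \<mu>"
    and z: "z \<in> Im \<gamma>" "1 \<le> f z"
    and oscillation: "\<And>y. y \<in> Im \<gamma> \<Longrightarrow> ennreal \<bar>f z - f y\<bar> \<le> line_int \<mu> \<gamma> \<rho>"
    and large: "1 \<le> ennreal c * emeasure \<mu> (Im \<gamma>)" and c: "0 < c"
  shows "1 \<le> line_int \<mu> \<gamma> (\<lambda>x. max (ennreal 2 * \<rho> x) (ennreal (2 * c * \<bar>f x\<bar>)))"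
    (is "1 \<le> line_int \<mu> \<gamma> ?h")
proof (cases "ennreal (1/2) \<le> line_int \<mu> \<gamma> \<rho>")
  case True
  have "1 = ennreal 2 * ennreal (1/2)" by (subst ennreal_mult[symmetric]) auto
  also have "\<dots> \<le> ennreal 2 * line_int \<mu> \<gamma> \<rho>" using True by (intro mult_left_mono) auto
  also have "\<dots> = line_int \<mu> \<gamma> (\<lambda>x. ennreal 2 * \<rho> x)"
    unfolding line_int_def using \<rho>_meas Im_sets by (simp add: nn_integral_cmult mult.assoc)
  also have "\<dots> \<le> line_int \<mu> \<gamma> ?h" by (intro line_int_mono) auto
  finally show ?thesis .
next
  case False
  have c_le_h: "ennreal c \<le> ?h y" if y: "y \<in> Im \<gamma>" for y
  proof -
    have "ennreal \<bar>f z - f y\<bar> < ennreal (1/2)" using oscillation[OF y] False by auto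
    then have "\<bar>f z - f y\<bar> < 1/2" using ennreal_less_iff[OF abs_ge_zero] by blast
    then have "1 \<le> 2 * \<bar>f y\<bar>" using z(2) by linarith
    then have "c * 1 \<le> c * (2 * \<bar>f y\<bar>)" using c by (intro mult_left_mono) auto
    then have "ennreal c \<le> ennreal (2 * c * \<bar>f y\<bar>)" by (intro ennreal_leI) (simp add: ac_simps)
    then show ?thesis by (rule order_trans) simp
  qed
  have "1 \<le> ennreal c * emeasure \<mu> (Im \<gamma>)" by (rule large)
  also have "\<dots> = (\<integral>\<^sup>+x. ennreal c * indicator (Im \<gamma>) x \<partial>\<mu>)"
    using Im_sets by (simp add: nn_integral_cmult_indicator)
  also have "\<dots> \<le> line_int \<mu> \<gamma> ?h" unfolding line_int_def
    using c_le_h by (intro nn_integral_mono) (auto split: split_indicator)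
  finally show ?thesis .
qed

lemma hitting_paths_subset_exceptional_or_admissible:
  fixes f :: "'a::metric_space \<Rightarrow> real"
  assumes sets_\<mu>: "sets \<mu> = sets borel"
    and paths: "\<And>\<gamma>. \<gamma> \<in> \<Gamma>s \<Longrightarrow> is_path \<gamma>"
    and subpath_closed: "\<And>\<gamma> \<sigma>. \<gamma> \<in> \<Gamma>s \<Longrightarrow> \<sigma> \<in> nontriv_subpaths \<gamma> \<Longrightarrow> \<sigma> \<in> \<Gamma>s"
    and \<rho>_meas: "\<rho> \<in> borel_measurable borel"
    and upper_gradient: "\<forall>\<sigma>\<in>\<Gamma>s - \<Gamma>0. ennreal \<bar>f (start_pt \<sigma>) - f (end_pt \<sigma>)\<bar> \<le> line_int \<mu> \<sigma> \<rho>"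
    and f_F: "\<And>x. x \<in> F \<Longrightarrow> 1 \<le> f x" and c: "0 < c"
  shows "{\<gamma> \<in> \<Gamma>s. Im \<gamma> \<inter> F \<noteq> {} \<and> 1 \<le> ennreal c * emeasure \<mu> (Im \<gamma>)}
    \<subseteq> {\<gamma>. \<exists>\<sigma>\<in>\<Gamma>0. Im \<sigma> \<subseteq> Im \<gamma>}
      \<union> {\<gamma>. 1 \<le> line_int \<mu> \<gamma> (\<lambda>x. max (ennreal 2 * \<rho> x) (ennreal (2 * c * \<bar>f x\<bar>)))}"
    (is "_ \<subseteq> _ \<union> {\<gamma>. 1 \<le> line_int \<mu> \<gamma> ?h}")
proof
  fix \<gamma> assume \<gamma>: "\<gamma> \<in> {\<gamma> \<in> \<Gamma>s. Im \<gamma> \<inter> F \<noteq> {} \<and> 1 \<le> ennreal c * emeasure \<mu> (Im \<gamma>)}"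
  then obtain x0 where x0: "x0 \<in> Im \<gamma>" "x0 \<in> F" by auto
  have \<gamma>_in: "\<gamma> \<in> \<Gamma>s" using \<gamma> by simp
  show "\<gamma> \<in> {\<gamma>. \<exists>\<sigma>\<in>\<Gamma>0. Im \<sigma> \<subseteq> Im \<gamma>} \<union> {\<gamma>. 1 \<le> line_int \<mu> \<gamma> ?h}"
  proof (cases "\<exists>\<sigma>\<in>nontriv_subpaths \<gamma>. \<sigma> \<in> \<Gamma>0")
    case True
    then show ?thesis using Im_nontriv_subpath by blast
  next
    case False
    have "1 \<le> line_int \<mu> \<gamma> ?h"
    proof (rule one_le_line_int_max[where z = x0])
      show "Im \<gamma> \<in> sets \<mu>" using closed_Im[OF paths[OF \<gamma>_in]] sets_\<mu> by simp
      show "\<rho> \<in> borel_measurable \<mu>" using \<rho>_meas by (simp add: measurable_cong_sets[OF sets_\<mu> refl])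
      show "ennreal \<bar>f x0 - f y\<bar> \<le> line_int \<mu> \<gamma> \<rho>" if "y \<in> Im \<gamma>" for y
        using False by (intro oscillation_le_line_int[OF \<gamma>_in subpath_closed[OF \<gamma>_in] _
              upper_gradient x0(1) that]) auto
    qed (use x0 f_F c \<gamma> in auto)
    then show ?thesis by simp
  qed
qed

lemma nn_integral_epow_max_le:
  fixes f :: "'a \<Rightarrow> real"
  assumes p: "0 < p" and meas: "\<rho> \<in> borel_measurable M" "f \<in> borel_measurable M"
    and ab: "0 < a" "0 \<le> b"
  shows "(\<integral>\<^sup>+x. epow (max (ennreal a * \<rho> x) (ennreal (b * \<bar>f x\<bar>))) p \<partial>M)
    \<le> ennreal (a powr p) * (\<integral>\<^sup>+x. epow (\<rho> x) p \<partial>M)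
      + ennreal (b powr p) * (\<integral>\<^sup>+x. ennreal (\<bar>f x\<bar> powr p) \<partial>M)"
proof -
  have pointwise: "epow (max (ennreal a * \<rho> x) (ennreal (b * \<bar>f x\<bar>))) p
      \<le> ennreal (a powr p) * epow (\<rho> x) p + ennreal (b powr p) * ennreal (\<bar>f x\<bar> powr p)" for x
  proof -
    have "epow (ennreal (b * \<bar>f x\<bar>)) p = ennreal (b powr p) * ennreal (\<bar>f x\<bar> powr p)"
      using ab by (subst epow_ennreal) (auto simp: powr_mult ennreal_mult)
    then show ?thesis
      using epow_max_le[of p "ennreal a * \<rho> x" "ennreal (b * \<bar>f x\<bar>)"] p ab
      by (simp add: epow_mult_ennreal)
  qed
  have "(\<integral>\<^sup>+x. epow (max (ennreal a * \<rho> x) (ennreal (b * \<bar>f x\<bar>))) p \<partial>M)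
      \<le> (\<integral>\<^sup>+x. ennreal (a powr p) * epow (\<rho> x) p + ennreal (b powr p) * ennreal (\<bar>f x\<bar> powr p) \<partial>M)"
    by (intro nn_integral_mono pointwise)
  also have "\<dots> = ennreal (a powr p) * (\<integral>\<^sup>+x. epow (\<rho> x) p \<partial>M)
      + ennreal (b powr p) * (\<integral>\<^sup>+x. ennreal (\<bar>f x\<bar> powr p) \<partial>M)"
    using meas by (subst nn_integral_add) (auto simp: nn_integral_cmult)
  finally show ?thesis .
qed

lemma N1p_norm_smallE:
  fixes \<mu> m :: "'a::metric_space measure"
  assumes inf_zero: "(INF f \<in> {f \<in> N1p_tilde p m \<mu> \<Gamma>s. \<forall>x\<in>F. f x \<ge> 1}. N1p_norm p m \<mu> \<Gamma>s f) = 0"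
    and p: "0 < p" and \<eta>: "0 < \<eta>"
  obtains f \<rho> where "f \<in> borel_measurable m" "\<And>x. x \<in> F \<Longrightarrow> 1 \<le> f x"
    "weak_upper_gradient p m \<mu> \<Gamma>s f \<rho>"
    "(\<integral>\<^sup>+x. ennreal (\<bar>f x\<bar> powr p) \<partial>m) < ennreal \<eta>" "(\<integral>\<^sup>+x. epow (\<rho> x) p \<partial>m) < ennreal \<eta>"
proof -
  define \<delta> where "\<delta> = \<eta> powr (1/p)"
  have "(INF f \<in> {f \<in> N1p_tilde p m \<mu> \<Gamma>s. \<forall>x\<in>F. f x \<ge> 1}. N1p_norm p m \<mu> \<Gamma>s f) < ennreal \<delta>"
    using inf_zero \<eta> by (simp add: \<delta>_def)
  then obtain f where f: "f \<in> N1p_tilde p m \<mu> \<Gamma>s" "\<forall>x\<in>F. 1 \<le> f x" "N1p_norm p m \<mu> \<Gamma>s f < ennreal \<delta>"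
    unfolding INF_less_iff by auto
  have "Lp_norm_real p m f < ennreal \<delta>"
    using f(3) unfolding N1p_norm_def by (meson add_increasing2 le_less_trans zero_le order.refl)
  then have f_small: "(\<integral>\<^sup>+x. ennreal (\<bar>f x\<bar> powr p) \<partial>m) < ennreal \<eta>"
    unfolding Lp_norm_real_def \<delta>_def using p \<eta> by (rule less_of_epow_inverse_less)
  have "(INF \<rho> \<in> {\<rho>. weak_upper_gradient p m \<mu> \<Gamma>s f \<rho>}. Lp_norm_enn p m \<rho>) < ennreal \<delta>"
    using f(3) unfolding N1p_norm_def by (meson add_increasing le_less_trans zero_le order.refl)
  then obtain \<rho> where \<rho>: "weak_upper_gradient p m \<mu> \<Gamma>s f \<rho>" "Lp_norm_enn p m \<rho> < ennreal \<delta>"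
    unfolding INF_less_iff by auto
  have "(\<integral>\<^sup>+x. epow (\<rho> x) p \<partial>m) < ennreal \<eta>"
    using \<rho>(2) unfolding Lp_norm_enn_def \<delta>_def using p \<eta> by (rule less_of_epow_inverse_less)
  moreover have "f \<in> borel_measurable m" using f(1) by (simp add: N1p_tilde_def)
  ultimately show ?thesis using that f(2) \<rho>(1) f_small by blast
qed

lemma Mod_hitting_paths_of_large_measure_zero:
  fixes \<mu> m :: "'a::metric_space measure"
  assumes sets_\<mu>: "sets \<mu> = sets borel" and sets_m: "sets m = sets borel" and p: "0 < p"
    and paths: "\<And>\<gamma>. \<gamma> \<in> \<Gamma>s \<Longrightarrow> is_path \<gamma>"
    and subpath_closed: "\<And>\<gamma> \<sigma>. \<gamma> \<in> \<Gamma>s \<Longrightarrow> \<sigma> \<in> nontriv_subpaths \<gamma> \<Longrightarrow> \<sigma> \<in> \<Gamma>s"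
    and inf_zero: "(INF f \<in> {f \<in> N1p_tilde p m \<mu> \<Gamma>s. \<forall>x\<in>F. f x \<ge> 1}. N1p_norm p m \<mu> \<Gamma>s f) = 0"
    and c: "0 < c"
  shows "Mod p m \<mu> {\<gamma> \<in> \<Gamma>s. Im \<gamma> \<inter> F \<noteq> {} \<and> 1 \<le> ennreal c * emeasure \<mu> (Im \<gamma>)} = 0"
    (is "Mod p m \<mu> ?G = 0")
proof -
  have approx: "Mod p m \<mu> ?G \<le> 0 + ennreal e" if e: "0 < e" for e :: real
  proof -
    define C where "C = 2 powr p + (2 * c) powr p"
    define \<eta> where "\<eta> = e / C"
    have "0 < C" using c by (simp add: C_def add_pos_pos)
    then have \<eta>: "0 < \<eta>" using e by (simp add: \<eta>_def)
    obtain f \<rho> where f_meas: "f \<in> borel_measurable m" and f_F: "\<And>x. x \<in> F \<Longrightarrow> 1 \<le> f x"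
      and wug: "weak_upper_gradient p m \<mu> \<Gamma>s f \<rho>"
      and f_small: "(\<integral>\<^sup>+x. ennreal (\<bar>f x\<bar> powr p) \<partial>m) < ennreal \<eta>"
      and \<rho>_small: "(\<integral>\<^sup>+x. epow (\<rho> x) p \<partial>m) < ennreal \<eta>"
      using N1p_norm_smallE[OF inf_zero p \<eta>] by blast
    from wug obtain \<Gamma>0 where \<rho>_meas: "\<rho> \<in> borel_measurable borel" and "Mod p m \<mu> \<Gamma>0 = 0"
      and upper_gradient: "\<forall>\<sigma>\<in>\<Gamma>s - \<Gamma>0. ennreal \<bar>f (start_pt \<sigma>) - f (end_pt \<sigma>)\<bar> \<le> line_int \<mu> \<sigma> \<rho>"
      unfolding weak_upper_gradient_def by blast
    define h where "h x = max (ennreal 2 * \<rho> x) (ennreal (2 * c * \<bar>f x\<bar>))" for x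
    have f_borel: "f \<in> borel_measurable borel" using f_meas by (simp add: measurable_cong_sets[OF sets_m refl])
    have h_meas: "h \<in> borel_measurable borel" unfolding h_def using \<rho>_meas f_borel by measurable
    have cover: "?G \<subseteq> {\<gamma>. \<exists>\<sigma>\<in>\<Gamma>0. Im \<sigma> \<subseteq> Im \<gamma>} \<union> {\<gamma>. 1 \<le> line_int \<mu> \<gamma> h}"
      unfolding h_def
      by (rule hitting_paths_subset_exceptional_or_admissible[OF sets_\<mu> paths subpath_closed
            \<rho>_meas upper_gradient f_F c])
    have "Mod p m \<mu> ?G \<le> Mod p m \<mu> {\<gamma>. \<exists>\<sigma>\<in>\<Gamma>0. Im \<sigma> \<subseteq> Im \<gamma>} + Mod p m \<mu> {\<gamma>. 1 \<le> line_int \<mu> \<gamma> h}"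
      using Mod_mono[OF cover] Mod_Un_le[OF p sets_m] by (rule order_trans)
    also have "\<dots> \<le> Mod p m \<mu> \<Gamma>0 + (\<integral>\<^sup>+x. epow (h x) p \<partial>m)"
      by (intro add_mono Mod_le_subpath_family Mod_le h_meas) auto
    also have "\<dots> \<le> 0 + (ennreal (2 powr p) * (\<integral>\<^sup>+x. epow (\<rho> x) p \<partial>m)
        + ennreal ((2 * c) powr p) * (\<integral>\<^sup>+x. ennreal (\<bar>f x\<bar> powr p) \<partial>m))"
      using \<open>Mod p m \<mu> \<Gamma>0 = 0\<close> p f_meas c \<rho>_meas unfolding h_def
      by (intro add_mono nn_integral_epow_max_le) (auto simp: measurable_cong_sets[OF sets_m refl])
    also have "\<dots> \<le> 0 + (ennreal (2 powr p) * ennreal \<eta> + ennreal ((2 * c) powr p) * ennreal \<eta>)"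
      using f_small \<rho>_small by (intro add_mono mult_left_mono) auto
    also have "\<dots> = 0 + ennreal (C * \<eta>)"
      using \<eta> by (simp add: C_def distrib_right ennreal_mult ennreal_plus)
    also have "C * \<eta> = e" using \<open>0 < C\<close> by (simp add: \<eta>_def)
    finally show ?thesis .
  qed
  have "Mod p m \<mu> ?G \<le> 0" by (rule ennreal_le_epsilon) (rule approx)
  then show ?thesis by simp
qed

theorem lemma4p2:
  fixes \<mu> m :: "'a::metric_space measure" and p :: real
    and \<Gamma>s :: "'a path set" and F :: "'a set"
  assumes "sets \<mu> = sets borel" and "sets m = sets borel"
    and "\<And>x. emeasure \<mu> {x} = 0"
    and "0 < p"
    and "\<Gamma>s \<subseteq> Gamma_mu \<mu>"
    and "\<And>\<gamma> \<sigma>. \<gamma> \<in> \<Gamma>s \<Longrightarrow> \<sigma> \<in> nontriv_subpaths \<gamma> \<Longrightarrow> \<sigma> \<in> \<Gamma>s"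
    and "\<And>x y. x \<noteq> y \<Longrightarrow> \<exists>\<gamma>\<in>\<Gamma>s. start_pt \<gamma> = x \<and> end_pt \<gamma> = y"
    and "(INF f \<in> {f \<in> N1p_tilde p m \<mu> \<Gamma>s. \<forall>x\<in>F. f x \<ge> 1}. N1p_norm p m \<mu> \<Gamma>s f) = 0"
  shows "Mod p m \<mu> {\<gamma> \<in> \<Gamma>s. Im \<gamma> \<inter> F \<noteq> {}} = 0"
proof -
  define G where "G n = {\<gamma> \<in> \<Gamma>s. Im \<gamma> \<inter> F \<noteq> {} \<and> 1 \<le> ennreal (real (Suc n)) * emeasure \<mu> (Im \<gamma>)}" for n
  have "{\<gamma> \<in> \<Gamma>s. Im \<gamma> \<inter> F \<noteq> {}} \<subseteq> (\<Union>n. G n)"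
  proof
    fix \<gamma> assume \<gamma>: "\<gamma> \<in> {\<gamma> \<in> \<Gamma>s. Im \<gamma> \<inter> F \<noteq> {}}"
    then have "0 < emeasure \<mu> (Im \<gamma>)" using assms(5) Gamma_mu_emeasure_Im_pos by blast
    then obtain n where "1 \<le> ennreal (real (Suc n)) * emeasure \<mu> (Im \<gamma>)" by (rule ex_Suc_mult_ge_one)
    then show "\<gamma> \<in> (\<Union>n. G n)" using \<gamma> by (auto simp: G_def)
  qed
  then have "Mod p m \<mu> {\<gamma> \<in> \<Gamma>s. Im \<gamma> \<inter> F \<noteq> {}} \<le> (\<Sum>n. Mod p m \<mu> (G n))"
    using Mod_UN_le[OF assms(4,2)] by (meson Mod_mono order_trans)
  moreover have "Mod p m \<mu> (G n) = 0" for n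
    unfolding G_def using assms(5)
    by (intro Mod_hitting_paths_of_large_measure_zero[OF assms(1,2,4) _ assms(6,8)]) (auto simp: Gamma_mu_def)
  ultimately show ?thesis by simp
qed

end
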